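(* Let $Q$ be a compact metric space, $Q_0\subset Q$ open, $Q_1=Q\setminus Q_0$, $p_0:Q_0\to[0,+\infty)$ lower semicontinuous, $c:Q\times Q\to[0,+\infty)$ continuous with $c(x,x)=0$ for all $x$, and $f$ a nonnegative Radon measure on $Q$ of positive mass. Let $\mathcal A=\{p:Q\to\mathbb{R}\ :\ p=p_0\text{ on }Q_0,\ p\text{ lower semicontinuous on }Q\}$. Let $p\in\mathcal A$ with $p\ge0$, set $w=w_p$, define $\tilde u(y)=\inf_{x\in Q}\{c(x,y)-w(x)\}$ for $y\in Q_1$, and $\tilde p=p_0$ on $Q_0$, $\tilde p=-\tilde u$ on $Q_1$. Then (i) $v_{\tilde p}=v_p$, $\tilde p\le p$ on $Q_1$, and $\tilde p\ge0$ on $Q$; (ii) $T_p(x)\cap Q_1\subset T_{\tilde p}(x)\cap Q_1$ for all $x\in\Omega_1(p)$; (iii) $\Omega_1(p)\subset\Omega_1(\tilde p)=\{w\le v_0\}$; (iv) $T_{\tilde p}(x)\cap Q_1=\partial^{1,c}w(x)$ for all $x\in\Omega_1(\tilde p)$; and consequently $\Pi(\tilde p)\ge\Pi(p)$ and $$\Pi(\tilde p)=\int_{\{w\le v_0\}}\Big(w(x)-\min_{y\in\partial^{1,c}w(x)}c(x,y)\Big)\,df(x).$$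
   Context: For $p\in\mathcal A$ and $x\in Q$: $v_p(x)=\min_{y\in Q}\{c(x,y)+p(y)\}$, $T_p(x)=\{y\in Q: c(x,y)+p(y)=v_p(x)\}$, $v_0(x)=\inf_{y\in Q_0}\{c(x,y)+p_0(y)\}$, $w_p(x)=\inf_{y\in Q_1}\{c(x,y)+p(y)\}$ (so $v_p=\min(v_0,w_p)$). $\Omega_1(p)=\{x\in Q: T_p(x)\cap Q_1\ne\emptyset\}$. The profit is $\Pi(p)=\int_{\Omega_1(p)}\big(\max_{y\in T_p(x)\cap Q_1}p(y)\big)\,df(x)$. For a function $w$ of the form $w(x)=\inf_{y\in Q_1}\{c(x,y)-u(y)\}$ with $u:Q_1\to\mathbb{R}$ bounded above (called $(Q_1,c)$-concave), $w^c(y)=\inf_{x\in Q}\{c(x,y)-w(x)\}$ for $y\in Q_1$, and $\partial^{1,c}w(x)=\{y\in Q_1: w(x)+w^c(y)=c(x,y)\}$. *)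

theory Defs
  imports "HOL-Analysis.Analysis"
begin

text \<open>Setting: the compact metric space Q is the whole (compact) type 'a; Q0 is an open
  subset and Q1 = - Q0. Infima are taken in ereal so that an infimum over an empty set is
  +infinity, as in the paper.\<close>

definition lsc_on :: "'a::topological_space set \<Rightarrow> ('a \<Rightarrow> real) \<Rightarrow> bool" where
  "lsc_on S g \<longleftrightarrow> (\<forall>x\<in>S. \<forall>t. t < g x \<longrightarrow> (\<forall>\<^sub>F y in at x within S. t < g y))"

definition vfun :: "('a \<Rightarrow> 'a \<Rightarrow> real) \<Rightarrow> ('a \<Rightarrow> real) \<Rightarrow> 'a \<Rightarrow> ereal" where
  "vfun c p x = (INF y. ereal (c x y + p y))"

definition Tset :: "('a \<Rightarrow> 'a \<Rightarrow> real) \<Rightarrow> ('a \<Rightarrow> real) \<Rightarrow> 'a \<Rightarrow> 'a set" where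
  "Tset c p x = {y. ereal (c x y + p y) = vfun c p x}"

definition v0fun :: "('a \<Rightarrow> 'a \<Rightarrow> real) \<Rightarrow> 'a set \<Rightarrow> ('a \<Rightarrow> real) \<Rightarrow> 'a \<Rightarrow> ereal" where
  "v0fun c Q0 p0 x = (INF y\<in>Q0. ereal (c x y + p0 y))"

definition wfun :: "('a \<Rightarrow> 'a \<Rightarrow> real) \<Rightarrow> 'a set \<Rightarrow> ('a \<Rightarrow> real) \<Rightarrow> 'a \<Rightarrow> ereal" where
  "wfun c Q0 p x = (INF y\<in>- Q0. ereal (c x y + p y))"

definition Omega1 :: "('a \<Rightarrow> 'a \<Rightarrow> real) \<Rightarrow> 'a set \<Rightarrow> ('a \<Rightarrow> real) \<Rightarrow> 'a set" where
  "Omega1 c Q0 p = {x. Tset c p x \<inter> - Q0 \<noteq> {}}"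

definition Profit :: "('a \<Rightarrow> 'a \<Rightarrow> real) \<Rightarrow> 'a set \<Rightarrow> 'a measure \<Rightarrow> ('a \<Rightarrow> real) \<Rightarrow> real" where
  "Profit c Q0 f p = (LINT x:Omega1 c Q0 p|f. Sup (p ` (Tset c p x \<inter> - Q0)))"

definition cconj :: "('a \<Rightarrow> 'a \<Rightarrow> real) \<Rightarrow> ('a \<Rightarrow> ereal) \<Rightarrow> 'a \<Rightarrow> ereal" where
  "cconj c w y = (INF x. ereal (c x y) - w x)"

definition csubdiff :: "('a \<Rightarrow> 'a \<Rightarrow> real) \<Rightarrow> 'a set \<Rightarrow> ('a \<Rightarrow> ereal) \<Rightarrow> 'a \<Rightarrow> 'a set" where
  "csubdiff c Q0 w x = {y\<in>- Q0. w x + cconj c w y = ereal (c x y)}"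

definition ptilde :: "('a \<Rightarrow> 'a \<Rightarrow> real) \<Rightarrow> 'a set \<Rightarrow> ('a \<Rightarrow> real) \<Rightarrow> ('a \<Rightarrow> real) \<Rightarrow> 'a \<Rightarrow> real" where
  "ptilde c Q0 p0 p y = (if y \<in> Q0 then p0 y else - real_of_ereal (cconj c (wfun c Q0 p) y))"

end

theory Submission
  imports Defs
begin

text \<open>
  Replacing the prices on \<open>Q\<^sub>1\<close> by \<open>p\<^sup>~ = -w\<^sup>c\<close> can only lower them, because
  \<open>w \<le> c(\<cdot>,y) + p(y)\<close> for \<open>y \<in> Q\<^sub>1\<close>; yet it does not lower the indirect utility, because
  \<open>c(x,y) + p\<^sup>~(y) \<ge> w(x) \<ge> v(x)\<close>. Hence every optimal product of \<open>p\<close> in \<open>Q\<^sub>1\<close> stays optimal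
  for \<open>p\<^sup>~\<close> at the same price, which gives \<open>\<Pi>(p\<^sup>~) \<ge> \<Pi>(p)\<close>. For \<open>p\<^sup>~\<close> the optimal products
  in \<open>Q\<^sub>1\<close> are exactly the contact points \<open>w(x) + w\<^sup>c(y) = c(x,y)\<close>, and they exist iff
  \<open>w(x) \<le> v\<^sub>0(x)\<close>; on them \<open>p\<^sup>~(y) = w(x) - c(x,y)\<close>, which yields the profit formula.
  Continuity of \<open>w\<^sup>c\<close> and compactness make the maxima attained and the profit density
  upper semicontinuous, hence integrable.
\<close>

lemma closed_fst_image:
  fixes S :: "('a::topological_space \<times> 'b::topological_space) set"
  assumes "compact (UNIV :: 'b set)" "closed S"
  shows "closed (fst ` S)"
proof -
  have "closed_map (prod_topology euclidean (euclidean :: 'b topology)) (euclidean :: 'a topology) fst"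
    using assms(1) by (intro closed_map_fst) (simp add: compact_space_def)
  then show ?thesis
    using assms(2) unfolding closed_map_def euclidean_product_topology closed_closedin by simp
qed

lemma lsc_on_subset: "lsc_on T g \<Longrightarrow> S \<subseteq> T \<Longrightarrow> lsc_on S g"
  unfolding lsc_on_def by (meson at_le filter_leD subsetD)

lemma lsc_on_add_continuous:
  fixes g h :: "'a::topological_space \<Rightarrow> real"
  assumes "lsc_on S g" "continuous_on S h"
  shows "lsc_on S (\<lambda>x. h x + g x)"
  unfolding lsc_on_def
proof (intro ballI allI impI)
  fix x t assume x: "x \<in> S" and t: "t < h x + g x"
  define d where "d = (h x + g x - t) / 2"
  have "d > 0" using t by (simp add: d_def)
  have "\<forall>\<^sub>F y in at x within S. g x - d < g y"
    using assms(1) x \<open>d > 0\<close> unfolding lsc_on_def by simp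
  moreover have "\<forall>\<^sub>F y in at x within S. h x - d < h y"
    using assms(2) x \<open>d > 0\<close> by (intro order_tendstoD) (auto simp: continuous_on_def)
  ultimately show "\<forall>\<^sub>F y in at x within S. t < h y + g y"
    by eventually_elim (simp add: d_def field_simps)
qed

lemma lsc_on_attains_min:
  fixes g :: "'a::topological_space \<Rightarrow> real"
  assumes "compact S" "S \<noteq> {}" "lsc_on S g"
  shows "\<exists>y\<in>S. \<forall>z\<in>S. g y \<le> g z"
proof (rule ccontr)
  assume "\<not> ?thesis"
  then obtain z where z: "\<And>y. y \<in> S \<Longrightarrow> z y \<in> S \<and> g (z y) < g y"
    by (metis not_le)
  have "\<exists>U. open U \<and> y \<in> U \<and> (\<forall>u\<in>U \<inter> S. g (z y) < g u)" if "y \<in> S" for y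
  proof -
    have "\<forall>\<^sub>F u in at y within S. g (z y) < g u"
      using assms(3) z that unfolding lsc_on_def by blast
    then obtain U where "open U" "y \<in> U" "\<forall>u\<in>U. u \<in> S \<longrightarrow> u \<noteq> y \<longrightarrow> g (z y) < g u"
      unfolding eventually_at_topological by blast
    then show ?thesis using z[OF that] by (intro exI[of _ U]) auto
  qed
  then obtain U where U: "\<And>y. y \<in> S \<Longrightarrow> open (U y) \<and> y \<in> U y \<and> (\<forall>u\<in>U y \<inter> S. g (z y) < g u)"
    by metis
  obtain D where D: "D \<subseteq> S" "finite D" "S \<subseteq> (\<Union>y\<in>D. U y)"
    using compactE_image[OF assms(1), of S U] U by blast
  with assms(2) have "D \<noteq> {}" by auto
  \<comment> \<open>the best of the finitely many improvements \<open>z y\<close> is improved upon by another one\<close>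
  then obtain y0 where y0: "y0 \<in> D" "\<forall>y\<in>D. g (z y0) \<le> g (z y)"
    using ex_is_arg_min_if_finite[OF D(2) \<open>D \<noteq> {}\<close>, of "\<lambda>y. g (z y)"]
    by (auto simp: is_arg_min_linorder)
  have "z y0 \<in> S" using z D y0 by blast
  then obtain y where y: "y \<in> D" "z y0 \<in> U y" using D by blast
  then have "g (z y) < g (z y0)" using U \<open>z y0 \<in> S\<close> D by blast
  with y0 y show False by force
qed

lemma compact_uniformly_equicontinuous_fst:
  fixes c :: "'a::metric_space \<Rightarrow> 'b::metric_space \<Rightarrow> real"
  assumes "compact (UNIV :: 'a set)" "compact (UNIV :: 'b set)"
    and "continuous_on UNIV (\<lambda>(x, y). c x y)"
  shows "\<forall>e>0. \<exists>d>0. \<forall>x x' y. dist x x' < d \<longrightarrow> \<bar>c x y - c x' y\<bar> < e"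
proof (intro allI impI)
  fix e :: real assume "e > 0"
  have "uniformly_continuous_on UNIV (\<lambda>(x, y). c x y)"
    using compact_Times[OF assms(1,2)] assms(3) compact_uniformly_continuous by fastforce
  then obtain d where "d > 0"
    and d: "\<And>z z'. dist z' z < d \<Longrightarrow> dist ((\<lambda>(x, y). c x y) z') ((\<lambda>(x, y). c x y) z) < e"
    using \<open>e > 0\<close> unfolding uniformly_continuous_on_def by blast
  have "\<bar>c x y - c x' y\<bar> < e" if "dist x x' < d" for x x' y
    using d[of "(x, y)" "(x', y)"] that by (simp add: dist_Pair_Pair dist_real_def)
  with \<open>d > 0\<close> show "\<exists>d>0. \<forall>x x' y. dist x x' < d \<longrightarrow> \<bar>c x y - c x' y\<bar> < e" by blast
qed

lemma continuous_on_Inf_equicontinuous: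
  fixes h :: "'a::metric_space \<Rightarrow> 'b \<Rightarrow> real"
  assumes equicont: "\<forall>e>0. \<exists>d>0. \<forall>x x' y. dist x x' < d \<longrightarrow> \<bar>h x y - h x' y\<bar> < e"
    and "A \<noteq> {}" and bound: "\<And>x y. y \<in> A \<Longrightarrow> B \<le> h x y"
  shows "continuous_on UNIV (\<lambda>x. INF y\<in>A. h x y)"
  unfolding continuous_on_iff
proof (intro ballI allI impI)
  fix x e assume "(e::real) > 0"
  then obtain d where "d > 0" and d: "\<And>x x' y. dist x x' < d \<Longrightarrow> \<bar>h x y - h x' y\<bar> < e/2"
    using equicont[rule_format, of "e/2"] by auto
  have bdd: "bdd_below (h z ` A)" for z by (rule bdd_belowI2[where m=B]) (use bound in auto)
  have shift: "(INF y\<in>A. h a y) \<le> (INF y\<in>A. h b y) + e/2" if "dist a b < d" for a b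
  proof -
    have "(INF y\<in>A. h a y) - e/2 \<le> h b y" if "y \<in> A" for y
      using cINF_lower[OF bdd that, of a] d[OF \<open>dist a b < d\<close>, of y] by linarith
    then have "(INF y\<in>A. h a y) - e/2 \<le> (INF y\<in>A. h b y)"
      using \<open>A \<noteq> {}\<close> by (intro cINF_greatest)
    then show ?thesis by linarith
  qed
  show "\<exists>d>0. \<forall>x'\<in>UNIV. dist x' x < d \<longrightarrow> dist (INF y\<in>A. h x' y) (INF y\<in>A. h x y) < e"
  proof (intro exI[of _ d] conjI ballI impI)
    fix x' assume "dist x' x < d"
    moreover from this have "dist x x' < d" by (simp add: dist_commute)
    ultimately show "dist (INF y\<in>A. h x' y) (INF y\<in>A. h x y) < e"
      using shift \<open>e > 0\<close> by (fastforce simp: dist_real_def abs_less_iff)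
  qed (rule \<open>d > 0\<close>)
qed

locale monopoly_pricing =
  fixes c :: "'a::metric_space \<Rightarrow> 'a \<Rightarrow> real" and Q0 :: "'a set" and p0 p :: "'a \<Rightarrow> real"
  assumes compact_UNIV: "compact (UNIV :: 'a set)"
    and open_Q0: "open Q0"
    and Q1_nonempty: "- Q0 \<noteq> {}"
    and c_continuous: "continuous_on UNIV (\<lambda>(x, y). c x y)"
    and c_nonneg: "\<And>x y. c x y \<ge> 0"
    and c_diag: "\<And>x. c x x = 0"
    and p_Q0: "\<And>x. x \<in> Q0 \<Longrightarrow> p x = p0 x"
    and p_lsc: "lsc_on UNIV p"
    and p_nonneg: "\<And>x. p x \<ge> 0"
begin

abbreviation Q1 :: "'a set" where "Q1 \<equiv> - Q0"

abbreviation pt :: "'a \<Rightarrow> real" where "pt \<equiv> ptilde c Q0 p0 p"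

text \<open>Real-valued \<open>v\<^sub>p\<close>, \<open>w\<^sub>p\<close> and \<open>w\<^sub>p\<^sup>c\<close>: these infima are finite because \<open>Q\<^sub>1 \<noteq> {}\<close> and \<open>c\<close> is bounded.\<close>

definition v :: "'a \<Rightarrow> real" where "v x = (INF y. c x y + p y)"

definition w :: "'a \<Rightarrow> real" where "w x = (INF y\<in>Q1. c x y + p y)"

definition wc :: "'a \<Rightarrow> real" where "wc y = (INF x. c x y - w x)"

lemma closed_Q1: "closed Q1"
  using open_Q0 by (simp add: closed_Compl)

lemma compact_Q1: "compact Q1"
  using compact_Int_closed[OF compact_UNIV closed_Q1] by simp

lemma c_bounded: obtains M where "\<And>x y. c x y \<le> M"
proof -
  have "compact ((\<lambda>(x, y). c x y) ` UNIV)"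
    using compact_Times[OF compact_UNIV compact_UNIV] c_continuous
    by (intro compact_continuous_image) auto
  then have "bdd_above ((\<lambda>(x, y). c x y) ` UNIV)"
    by (intro bounded_imp_bdd_above compact_imp_bounded)
  then obtain M where "\<And>z. (\<lambda>(x, y). c x y) z \<le> M" by (auto simp: bdd_above_def)
  then show ?thesis by (intro that[of M]) (metis case_prod_conv)
qed

lemma continuous_on_c: "continuous_on S (c x)"
  using continuous_on_compose2[OF c_continuous continuous_on_Pair[OF continuous_on_const continuous_on_id]]
  by (auto intro: continuous_on_subset)

lemma bdd_below_cost: "bdd_below ((\<lambda>y. c x y + p y) ` A)"
  by (rule bdd_belowI2[where m=0]) (simp add: c_nonneg p_nonneg add_nonneg_nonneg)

lemma v_le: "v x \<le> c x y + p y"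
  unfolding v_def using bdd_below_cost by (rule cINF_lower) simp

lemma w_le: "y \<in> Q1 \<Longrightarrow> w x \<le> c x y + p y"
  unfolding w_def using bdd_below_cost by (rule cINF_lower)

lemma w_nonneg: "0 \<le> w x"
  unfolding w_def using Q1_nonempty c_nonneg p_nonneg by (intro cINF_greatest) (auto intro: add_nonneg_nonneg)

lemma w_attained: obtains y where "y \<in> Q1" "w x = c x y + p y"
proof -
  have "lsc_on Q1 (\<lambda>y. c x y + p y)"
    using lsc_on_subset[OF p_lsc] continuous_on_c by (intro lsc_on_add_continuous) auto
  then obtain y where "y \<in> Q1" and "\<forall>z\<in>Q1. c x y + p y \<le> c x z + p z"
    using lsc_on_attains_min[OF compact_Q1 Q1_nonempty] by blast
  then have "c x y + p y \<le> w x" unfolding w_def using Q1_nonempty by (intro cINF_greatest) auto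
  with w_le[OF \<open>y \<in> Q1\<close>] have "w x = c x y + p y" by (rule antisym)
  with \<open>y \<in> Q1\<close> show ?thesis by (rule that)
qed

lemma v_le_w: "v x \<le> w x"
  using v_le by (metis w_attained)

lemma bdd_above_w: "bdd_above (range w)"
proof -
  obtain M where M: "\<And>x y. c x y \<le> M" using c_bounded by blast
  obtain y where "y \<in> Q1" using Q1_nonempty by blast
  then have "w x \<le> M + p y" for x using w_le[of y x] M[of x y] by linarith
  then show ?thesis by (intro bdd_aboveI2)
qed

lemma c_minus_w_bounded_below: obtains B where "\<And>x y. - B \<le> c x y - w x"
proof -
  obtain B where B: "\<And>x. w x \<le> B" using bdd_above_w by (auto simp: bdd_above_def)
  then have "- B \<le> c x y - w x" for x y using c_nonneg[of x y] B[of x] by linarith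
  then show ?thesis by (rule that)
qed

lemma wc_le: "wc y \<le> c x y - w x"
proof -
  obtain B where "\<And>x y. - B \<le> c x y - w x" using c_minus_w_bounded_below by blast
  then have "bdd_below ((\<lambda>x. c x y - w x) ` UNIV)" by (intro bdd_belowI2)
  then show ?thesis unfolding wc_def by (rule cINF_lower) simp
qed

lemma wc_ge: assumes "y \<in> Q1" shows "- p y \<le> wc y"
proof -
  have "- p y \<le> c x y - w x" for x using w_le[OF assms, of x] by linarith
  then show ?thesis unfolding wc_def by (intro cINF_greatest) auto
qed

lemma wc_le_neg_w: "wc y \<le> - w y"
  using wc_le[of y y] by (simp add: c_diag)

lemma bdd_below_wc: "bdd_below (range wc)"
proof -
  obtain B where "\<And>x y. - B \<le> c x y - w x" using c_minus_w_bounded_below by blast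
  then have "- B \<le> wc y" for y unfolding wc_def by (intro cINF_greatest) auto
  then show ?thesis by (intro bdd_belowI2)
qed

lemma vfun_eq: "vfun c p x = ereal (v x)"
  unfolding vfun_def v_def using bdd_below_cost by (subst ereal_Inf') (auto simp: image_image)

lemma wfun_eq: "wfun c Q0 p x = ereal (w x)"
  unfolding wfun_def w_def using bdd_below_cost Q1_nonempty
  by (subst ereal_Inf') (auto simp: image_image)

lemma cconj_eq: "cconj c (wfun c Q0 p) y = ereal (wc y)"
proof -
  have "bdd_below ((\<lambda>x. c x y - w x) ` UNIV)"
    using bdd_below_wc wc_le by (auto simp: bdd_below_def intro: order_trans)
  then show ?thesis
    unfolding cconj_def wc_def wfun_eq by (subst ereal_Inf') (auto simp: image_image)
qed

lemma continuous_v: "continuous_on UNIV v"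
  unfolding v_def
  using compact_uniformly_equicontinuous_fst[OF compact_UNIV compact_UNIV c_continuous]
  by (intro continuous_on_Inf_equicontinuous[where B=0])
     (auto simp: c_nonneg p_nonneg add_nonneg_nonneg)

lemma continuous_wc: "continuous_on UNIV wc"
proof -
  obtain B where "\<And>x y. - B \<le> c x y - w x" using c_minus_w_bounded_below by blast
  moreover have "continuous_on UNIV (\<lambda>(y, x). c x y)"
    using continuous_on_swap_args[of UNIV UNIV "\<lambda>x y. c x y"] c_continuous by simp
  ultimately show ?thesis
    unfolding wc_def
    using compact_uniformly_equicontinuous_fst[OF compact_UNIV compact_UNIV, of "\<lambda>y x. c x y"]
    by (intro continuous_on_Inf_equicontinuous[where B="- B"]) auto
qed

lemma ptilde_Q1: "y \<in> Q1 \<Longrightarrow> pt y = - wc y"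
  by (simp add: ptilde_def cconj_eq)

lemma ptilde_Q0: "y \<in> Q0 \<Longrightarrow> pt y = p y"
  by (simp add: ptilde_def p_Q0)

lemma ptilde_le: "pt y \<le> p y"
  using ptilde_Q0 ptilde_Q1 wc_ge by (cases "y \<in> Q0") force+

lemma ptilde_nonneg: "0 \<le> pt y"
proof (cases "y \<in> Q0")
  case False
  then show ?thesis using ptilde_Q1[of y] wc_le_neg_w[of y] w_nonneg[of y] by simp
qed (simp add: ptilde_Q0 p_nonneg)

lemma w_le_ptilde: "y \<in> Q1 \<Longrightarrow> w x \<le> c x y + pt y"
  using wc_le[of y x] ptilde_Q1 by simp

lemma vfun_ptilde: "vfun c pt = vfun c p"
proof
  fix x
  have "vfun c pt x \<le> vfun c p x"
    unfolding vfun_def using ptilde_le by (intro INF_mono') simp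
  moreover have "vfun c p x \<le> ereal (c x y + pt y)" for y
  proof (cases "y \<in> Q0")
    case True
    then show ?thesis unfolding vfun_def using ptilde_Q0 by (auto intro: INF_lower2)
  next
    case False
    then show ?thesis using v_le_w[of x] w_le_ptilde[of y x] by (simp add: vfun_eq)
  qed
  then have "vfun c p x \<le> vfun c pt x" unfolding vfun_def by (rule INF_greatest)
  ultimately show "vfun c pt x = vfun c p x" by (rule antisym)
qed

lemma vfun_le_v0fun: "vfun c p x \<le> v0fun c Q0 p0 x"
  unfolding vfun_def v0fun_def by (rule INF_superset_mono) (simp_all add: p_Q0)

lemma v_eq_w: assumes "ereal (w x) \<le> v0fun c Q0 p0 x" shows "v x = w x"
proof -
  have "w x \<le> c x y + p y" for y
  proof (cases "y \<in> Q0")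
    case True
    then have "v0fun c Q0 p0 x \<le> ereal (c x y + p y)"
      unfolding v0fun_def p_Q0[OF True] by (rule INF_lower)
    with assms show ?thesis by (metis ereal_less_eq(3) order_trans)
  qed (simp add: w_le)
  then have "w x \<le> v x" unfolding v_def by (intro cINF_greatest) auto
  with v_le_w show ?thesis by (rule antisym)
qed

lemma Tset_ptilde_Q1: "Tset c pt x \<inter> Q1 = {y \<in> Q1. c x y - wc y = v x}"
  using ptilde_Q1 by (auto simp: Tset_def vfun_ptilde vfun_eq)

lemma ptilde_eq_on_Tset:
  assumes "y \<in> Tset c p x" shows "y \<in> Tset c pt x" and "pt y = p y"
proof -
  have "ereal (c x y + pt y) \<le> vfun c pt x"
    using assms ptilde_le[of y] by (auto simp: Tset_def vfun_ptilde vfun_eq)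
  moreover have "vfun c pt x \<le> ereal (c x y + pt y)" unfolding vfun_def by (rule INF_lower) simp
  ultimately have "ereal (c x y + pt y) = vfun c pt x" by (rule antisym)
  then show "y \<in> Tset c pt x" by (simp add: Tset_def)
  from \<open>ereal (c x y + pt y) = vfun c pt x\<close> assms show "pt y = p y"
    by (simp add: Tset_def vfun_ptilde vfun_eq)
qed

lemma Tset_subset_Tset_ptilde: "Tset c p x \<inter> Q1 \<subseteq> Tset c pt x \<inter> Q1"
  using ptilde_eq_on_Tset(1) by blast

lemma Omega1_subset_Omega1_ptilde: "Omega1 c Q0 p \<subseteq> Omega1 c Q0 pt"
  using Tset_subset_Tset_ptilde unfolding Omega1_def by blast

lemma Omega1_ptilde: "Omega1 c Q0 pt = {x. wfun c Q0 p x \<le> v0fun c Q0 p0 x}"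
proof (intro set_eqI iffI)
  fix x assume "x \<in> Omega1 c Q0 pt"
  then obtain y where "y \<in> Q1" "ereal (c x y + pt y) = vfun c p x"
    by (auto simp: Omega1_def Tset_def vfun_ptilde)
  then show "x \<in> {x. wfun c Q0 p x \<le> v0fun c Q0 p0 x}"
    using w_le_ptilde[of y x] vfun_le_v0fun[of x] by (simp add: wfun_eq) (metis ereal_less_eq(3) order_trans)
next
  fix x assume "x \<in> {x. wfun c Q0 p x \<le> v0fun c Q0 p0 x}"
  then have "v x = w x" by (simp add: v_eq_w wfun_eq)
  obtain y where y: "y \<in> Q1" "w x = c x y + p y" by (rule w_attained)
  \<comment> \<open>a minimiser of \<open>w\<close> keeps its value, since \<open>w \<le> c + p\<^sup>~ \<le> c + p\<close>\<close>
  then have "c x y + pt y = w x" using w_le_ptilde[of y x] ptilde_le[of y] by linarith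
  with y(1) \<open>v x = w x\<close> show "x \<in> Omega1 c Q0 pt"
    by (auto simp: Omega1_def Tset_def vfun_ptilde vfun_eq)
qed

lemma v_eq_w_on_Omega1: "x \<in> Omega1 c Q0 pt \<Longrightarrow> v x = w x"
  using Omega1_ptilde v_eq_w by (simp add: wfun_eq)

lemma Tset_ptilde_eq_csubdiff:
  assumes "x \<in> Omega1 c Q0 pt" shows "Tset c pt x \<inter> Q1 = csubdiff c Q0 (wfun c Q0 p) x"
  using v_eq_w_on_Omega1[OF assms]
  by (auto simp: Tset_ptilde_Q1 csubdiff_def wfun_eq cconj_eq)

lemma Sup_ptilde_attained:
  assumes "x \<in> Omega1 c Q0 pt"
  obtains y0 where "y0 \<in> Tset c pt x \<inter> Q1" "\<And>y. y \<in> Tset c pt x \<inter> Q1 \<Longrightarrow> pt y \<le> pt y0"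
    "Sup (pt ` (Tset c pt x \<inter> Q1)) = pt y0"
proof -
  let ?S = "Tset c pt x \<inter> Q1"
  have "?S = Q1 \<inter> {y. c x y - wc y = v x}" by (auto simp: Tset_ptilde_Q1)
  moreover have "closed {y. c x y - wc y = v x}"
    by (intro closed_Collect_eq continuous_intros continuous_on_c continuous_wc)
  ultimately have "compact ?S" using compact_Int_closed[OF compact_Q1] by simp
  moreover have "?S \<noteq> {}" using assms by (auto simp: Omega1_def)
  moreover have "continuous_on ?S (\<lambda>y. - wc y)"
    using continuous_wc by (auto intro: continuous_on_minus continuous_on_subset)
  ultimately obtain y0 where y0: "y0 \<in> ?S" "\<forall>y\<in>?S. - wc y \<le> - wc y0"
    using continuous_attains_sup by blast
  then have max: "\<And>y. y \<in> ?S \<Longrightarrow> pt y \<le> pt y0" by (simp add: ptilde_Q1)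
  with y0(1) have "Sup (pt ` ?S) = pt y0" by (intro cSup_eq_maximum) auto
  with y0(1) max show ?thesis by (rule that)
qed

lemma Sup_ptilde_Tset_eq:
  assumes "x \<in> Omega1 c Q0 pt"
  shows "Sup (pt ` (Tset c pt x \<inter> Q1)) = w x - (INF y\<in>csubdiff c Q0 (wfun c Q0 p) x. c x y)"
proof -
  let ?S = "Tset c pt x \<inter> Q1"
  obtain y0 where y0: "y0 \<in> ?S" "\<And>y. y \<in> ?S \<Longrightarrow> pt y \<le> pt y0" "Sup (pt ` ?S) = pt y0"
    using Sup_ptilde_attained[OF assms] by blast
  have price: "pt y = w x - c x y" if "y \<in> ?S" for y
    using that v_eq_w_on_Omega1[OF assms] by (auto simp: Tset_ptilde_Q1 ptilde_Q1)
  have "(INF y\<in>?S. c x y) = c x y0"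
    using y0(1,2) price by (intro cInf_eq_minimum) force+
  then show ?thesis using y0(1,3) price Tset_ptilde_eq_csubdiff[OF assms] by simp
qed

definition profit_density :: "'a \<Rightarrow> real" where
  "profit_density x = indicator (Omega1 c Q0 pt) x *\<^sub>R Sup (pt ` (Tset c pt x \<inter> Q1))"

lemma Profit_ptilde: "Profit c Q0 f pt = integral\<^sup>L f profit_density"
  by (simp add: Profit_def set_lebesgue_integral_def profit_density_def[abs_def])

lemma profit_density_nonneg: "0 \<le> profit_density x"
proof (cases "x \<in> Omega1 c Q0 pt")
  case True
  then obtain y0 where "Sup (pt ` (Tset c pt x \<inter> Q1)) = pt y0"
    using Sup_ptilde_attained by blast
  then show ?thesis using True ptilde_nonneg[of y0] by (simp add: profit_density_def)
qed (simp add: profit_density_def)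

lemma profit_density_bounded: obtains B where "\<And>x. profit_density x \<le> B"
proof -
  obtain B where B: "\<And>y. B \<le> wc y" using bdd_below_wc by (auto simp: bdd_below_def)
  have "profit_density x \<le> max (- B) 0" for x
  proof (cases "x \<in> Omega1 c Q0 pt")
    case True
    then obtain y0 where "y0 \<in> Q1" "Sup (pt ` (Tset c pt x \<inter> Q1)) = pt y0"
      using Sup_ptilde_attained by blast
    then show ?thesis using True B[of y0] by (simp add: profit_density_def ptilde_Q1)
  qed (simp add: profit_density_def)
  then show ?thesis by (rule that)
qed

lemma closed_superlevel_profit_density: "closed {x. a \<le> profit_density x}"
proof (cases "a \<le> 0")
  case True
  then have "{x. a \<le> profit_density x} = UNIV" using profit_density_nonneg order_trans by blast
  then show ?thesis by simp
next
  case False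
  define Z where "Z = (UNIV \<times> Q1) \<inter> {z. c (fst z) (snd z) - wc (snd z) = v (fst z)} \<inter> {z. a \<le> - wc (snd z)}"
  have "continuous_on UNIV (\<lambda>z. c (fst z) (snd z))"
    using c_continuous by (simp add: case_prod_beta')
  moreover have "continuous_on UNIV (\<lambda>z. v (fst z))" "continuous_on UNIV (\<lambda>z. wc (snd z))"
    by (auto intro: continuous_on_compose2[OF continuous_v continuous_on_fst]
        continuous_on_compose2[OF continuous_wc continuous_on_snd])
  ultimately have "closed Z"
    unfolding Z_def using closed_Q1
    by (intro closed_Int closed_Times closed_UNIV closed_Collect_eq closed_Collect_le
        continuous_on_diff continuous_on_minus continuous_on_const) auto
  \<comment> \<open>the superlevel set is the shadow of the closed set \<open>Z\<close>, since the maximal price is attained\<close>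
  moreover have "{x. a \<le> profit_density x} = fst ` Z"
  proof (intro set_eqI iffI)
    fix x assume x: "x \<in> {x. a \<le> profit_density x}"
    with False have "x \<in> Omega1 c Q0 pt"
      by (cases "x \<in> Omega1 c Q0 pt") (simp_all add: profit_density_def)
    then obtain y0 where "y0 \<in> Tset c pt x \<inter> Q1" "Sup (pt ` (Tset c pt x \<inter> Q1)) = pt y0"
      using Sup_ptilde_attained by blast
    then have "(x, y0) \<in> Z" using x \<open>x \<in> Omega1 c Q0 pt\<close>
      by (auto simp: Z_def profit_density_def Tset_ptilde_Q1 ptilde_Q1)
    then show "x \<in> fst ` Z" by force
  next
    fix x assume "x \<in> fst ` Z"
    then obtain y where y: "y \<in> Tset c pt x \<inter> Q1" "a \<le> pt y"
      by (auto simp: Z_def Tset_ptilde_Q1 ptilde_Q1)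
    then have "x \<in> Omega1 c Q0 pt" by (auto simp: Omega1_def)
    then obtain y0 where "\<And>y. y \<in> Tset c pt x \<inter> Q1 \<Longrightarrow> pt y \<le> pt y0"
      "Sup (pt ` (Tset c pt x \<inter> Q1)) = pt y0"
      using Sup_ptilde_attained by blast
    with y \<open>x \<in> Omega1 c Q0 pt\<close> show "x \<in> {x. a \<le> profit_density x}"
      by (force simp: profit_density_def)
  qed
  ultimately show ?thesis using closed_fst_image[OF compact_UNIV] by simp
qed

lemma integrable_profit_density:
  assumes "sets f = sets borel" "finite_measure f"
  shows "integrable f profit_density"
proof -
  have "profit_density \<in> borel_measurable borel"
    unfolding borel_measurable_iff_ge using closed_superlevel_profit_density by simp
  then have "profit_density \<in> borel_measurable f"
    by (simp add: measurable_cong_sets[OF assms(1) refl])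
  moreover obtain B where "\<And>x. profit_density x \<le> B" using profit_density_bounded by blast
  ultimately show ?thesis
    using profit_density_nonneg
    by (intro finite_measure.integrable_const_bound[OF assms(2), where B=B]) auto
qed

lemma Profit_le_Profit_ptilde:
  assumes "sets f = sets borel" "finite_measure f"
  shows "Profit c Q0 f p \<le> Profit c Q0 f pt"
proof -
  have "indicator (Omega1 c Q0 p) x *\<^sub>R Sup (p ` (Tset c p x \<inter> Q1)) \<le> profit_density x" for x
  proof (cases "x \<in> Omega1 c Q0 p")
    case True
    then have "x \<in> Omega1 c Q0 pt" using Omega1_subset_Omega1_ptilde by blast
    then obtain y0 where "\<And>y. y \<in> Tset c pt x \<inter> Q1 \<Longrightarrow> pt y \<le> pt y0"
      using Sup_ptilde_attained by blast
    then have "bdd_above (pt ` (Tset c pt x \<inter> Q1))" by (intro bdd_aboveI2)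
    moreover have "p ` (Tset c p x \<inter> Q1) = pt ` (Tset c p x \<inter> Q1)"
      using ptilde_eq_on_Tset(2) by (intro image_cong) auto
    moreover have "Tset c p x \<inter> Q1 \<noteq> {}" using True by (auto simp: Omega1_def)
    ultimately show ?thesis
      using True \<open>x \<in> Omega1 c Q0 pt\<close> Tset_subset_Tset_ptilde
      by (auto simp: profit_density_def intro!: cSup_subset_mono)
  qed (use profit_density_nonneg in simp)
  then show ?thesis
    unfolding Profit_ptilde using profit_density_nonneg
    by (auto simp: Profit_def set_lebesgue_integral_def
        intro!: integral_mono_AE'[OF integrable_profit_density[OF assms]])
qed

lemma Profit_ptilde_eq:
  "Profit c Q0 f pt = (LINT x:{x. wfun c Q0 p x \<le> v0fun c Q0 p0 x}|f.
      real_of_ereal (wfun c Q0 p x) - Inf ((\<lambda>y. c x y) ` csubdiff c Q0 (wfun c Q0 p) x))"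
  unfolding Profit_def set_lebesgue_integral_def Omega1_ptilde[symmetric]
  by (intro arg_cong[where f="integral\<^sup>L f"] ext) (simp add: Sup_ptilde_Tset_eq wfun_eq indicator_def)

end

theorem proposition5p2:
  fixes c :: "'a::metric_space \<Rightarrow> 'a \<Rightarrow> real"
    and Q0 :: "'a set" and p0 p :: "'a \<Rightarrow> real" and f :: "'a measure"
  assumes Q_compact: "compact (UNIV :: 'a set)"
    and Q0_open: "open Q0"
    and p0_nonneg: "\<forall>x\<in>Q0. p0 x \<ge> 0"
    and p0_lsc: "lsc_on Q0 p0"
    and c_cont: "continuous_on UNIV (\<lambda>(x, y). c x y)"
    and c_nonneg: "\<forall>x y. c x y \<ge> 0"
    and c_diag: "\<forall>x. c x x = 0"
    and f_borel: "sets f = sets borel"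
    and f_finite: "finite_measure f"
    and f_pos: "emeasure f (space f) > 0"
    and p_A: "\<forall>x\<in>Q0. p x = p0 x" "lsc_on UNIV p"
    and p_nonneg: "\<forall>x. p x \<ge> 0"
  shows "vfun c (ptilde c Q0 p0 p) = vfun c p
       \<and> (\<forall>y\<in>- Q0. ptilde c Q0 p0 p y \<le> p y)
       \<and> (\<forall>y. ptilde c Q0 p0 p y \<ge> 0)
       \<and> (\<forall>x\<in>Omega1 c Q0 p. Tset c p x \<inter> - Q0 \<subseteq> Tset c (ptilde c Q0 p0 p) x \<inter> - Q0)
       \<and> Omega1 c Q0 p \<subseteq> Omega1 c Q0 (ptilde c Q0 p0 p)
       \<and> Omega1 c Q0 (ptilde c Q0 p0 p) = {x. wfun c Q0 p x \<le> v0fun c Q0 p0 x}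
       \<and> (\<forall>x\<in>Omega1 c Q0 (ptilde c Q0 p0 p).
            Tset c (ptilde c Q0 p0 p) x \<inter> - Q0 = csubdiff c Q0 (wfun c Q0 p) x)
       \<and> Profit c Q0 f (ptilde c Q0 p0 p) \<ge> Profit c Q0 f p
       \<and> Profit c Q0 f (ptilde c Q0 p0 p) =
           (LINT x:{x. wfun c Q0 p x \<le> v0fun c Q0 p0 x}|f.
              real_of_ereal (wfun c Q0 p x) - Inf ((\<lambda>y. c x y) ` csubdiff c Q0 (wfun c Q0 p) x))"
proof (cases "Q0 = UNIV")
  case True
  \<comment> \<open>no product outside \<open>Q\<^sub>0\<close>: \<open>p\<^sup>~ = p\<close>, nobody buys in \<open>Q\<^sub>1\<close>, and \<open>w \<equiv> \<infinity> > v\<^sub>0\<close>\<close>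
  have "ptilde c Q0 p0 p = p" using p_A(1) True by (auto simp: ptilde_def)
  moreover have "\<And>q. Omega1 c Q0 q = {}" using True by (simp add: Omega1_def)
  moreover have "v0fun c Q0 p0 x < \<infinity>" for x
    using True INF_lower[of x Q0 "\<lambda>y. ereal (c x y + p0 y)"] by (auto simp: v0fun_def)
  then have "{x. wfun c Q0 p x \<le> v0fun c Q0 p0 x} = {}"
    using True by (auto simp: wfun_def top_ereal_def)
  ultimately show ?thesis using p_nonneg by (simp add: Profit_def set_lebesgue_integral_def)
next
  case False
  then interpret monopoly_pricing c Q0 p0 p
    using assms by unfold_locales auto
  show ?thesis
    using vfun_ptilde ptilde_le ptilde_nonneg Tset_subset_Tset_ptilde Omega1_subset_Omega1_ptilde
      Omega1_ptilde Tset_ptilde_eq_csubdiff Profit_le_Profit_ptilde[OF f_borel f_finite]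
      Profit_ptilde_eq
    by blast
qed

end
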